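(* Fix $\vartheta>0$ and let $D_n^{(\vartheta)}$ be the depth of the $n$-th inserted node in a Hoppe tree with parameter $\vartheta$. Then, as $n\to\infty$, \begin{align*} \mathbb{E}[D_n^{(\vartheta)}] &= 1 + \sum_{i=1}^{n-2} \frac{1}{\vartheta+i} = \log n -\Psi(\vartheta+1) +1 + o(1),\\ \mathrm{Var}(D_n^{(\vartheta)}) &= \sum_{i=1}^{n-2}\frac{1}{\vartheta+i} - \sum_{i=1}^{n-2} \left( \frac{1}{\vartheta+i} \right)^2 = \log n -\Psi(\vartheta+1)-\Psi_1(\vartheta+1) + o(1),\\ \frac{D_n^{(\vartheta)}-\mathbb{E}[D_n^{(\vartheta)}]}{ \sqrt{\mathrm{Var}(D_n^{(\vartheta)})}} &\stackrel{d}{\longrightarrow} \mathcal{N}(0,1),\\ d_{\mathrm{TV}} \left(\mathcal{L}(D_n^{(\vartheta)}), \Pi\left(\mathbb{E}[D_n^{(\vartheta)}]\right) \right) &= \mathcal{O}\left(\frac{1}{\log n}\right). \end{align*}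
   Context: Hoppe tree with parameter $\vartheta>0$: the tree is grown by successive insertion of nodes, labelled $1,2,3,\ldots$ in order of insertion. Initially there is only the root (node $1$). In each step a parent node is chosen among the existing nodes, independently of the past, with probability proportional to its weight, where the root has weight $\vartheta$ and every other node has weight $1$; a new node is attached as a child of the chosen node. The depth of a node is its distance to the root. $\Psi=\frac{d}{dx}\log\Gamma$ is the digamma function and $\Psi_1=\frac{d^2}{dx^2}\log\Gamma$ the trigamma function. $\Pi(\lambda)$ denotes the Poisson distribution with parameter $\lambda$, $d_{\mathrm{TV}}$ the total variation distance, $\mathcal{L}(X)$ the law of $X$, and $\mathcal{N}(0,1)$ the standard normal distribution. *)

theory Defs
  imports "HOL-Probability.Probability" "HOL-Library.Landau_Symbols"
begin

text \<open>Hoppe tree. Nodes are labelled 1,2,3,...; node 1 is the root.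
  A tree on nodes 1..n is encoded by its parent map p (p j = parent of node j, for 2 \<le> j \<le> n).\<close>

definition parent_pmf :: "real \<Rightarrow> nat \<Rightarrow> nat pmf" where
  "parent_pmf \<theta> k = embed_pmf (\<lambda>j. if j = 1 then \<theta> / (\<theta> + real k - 1)
      else if 2 \<le> j \<and> j \<le> k then 1 / (\<theta> + real k - 1) else 0)"

fun hoppe_tree :: "real \<Rightarrow> nat \<Rightarrow> (nat \<Rightarrow> nat) pmf" where
  "hoppe_tree \<theta> 0 = return_pmf (\<lambda>_. 0)"
| "hoppe_tree \<theta> (Suc 0) = return_pmf (\<lambda>_. 0)"
| "hoppe_tree \<theta> (Suc (Suc k)) =
     hoppe_tree \<theta> (Suc k) \<bind> (\<lambda>p. parent_pmf \<theta> (Suc k) \<bind> (\<lambda>j. return_pmf (p(Suc (Suc k) := j))))"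

fun depth_fuel :: "(nat \<Rightarrow> nat) \<Rightarrow> nat \<Rightarrow> nat \<Rightarrow> nat" where
  "depth_fuel p 0 j = 0"
| "depth_fuel p (Suc f) j = (if j \<le> 1 then 0 else Suc (depth_fuel p f (p j)))"

definition depth :: "(nat \<Rightarrow> nat) \<Rightarrow> nat \<Rightarrow> nat" where
  "depth p j = depth_fuel p j j"

definition depth_law :: "real \<Rightarrow> nat \<Rightarrow> nat pmf" where
  "depth_law \<theta> n = map_pmf (\<lambda>p. depth p n) (hoppe_tree \<theta> n)"

definition dTV :: "nat pmf \<Rightarrow> nat pmf \<Rightarrow> real" where
  "dTV P Q = (SUP A. \<bar>measure_pmf.prob P A - measure_pmf.prob Q A\<bar>)"

end

theory Submission
  imports Defs "HOL-Real_Asymp.Real_Asymp"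
begin

text \<open>
  When node \<open>k + 2\<close> is inserted, its parent is the root with probability \<open>\<theta> / (\<theta> + k)\<close> and
  otherwise a uniformly chosen node \<open>i + 2\<close>, \<open>i < k\<close>, whose depth has the law \<open>q i\<close> of \<open>D (i + 2)\<close>.
  Hence \<open>(\<theta> + k) q k = \<theta> \<delta>\<^sub>1 + \<Sum>i<k. q i (\<cdot> - 1)\<close>, and subtracting consecutive instances gives
  \<open>q (k + 1) = (1 - p (k + 1)) q k + p (k + 1) q k (\<cdot> - 1)\<close> with \<open>p i = 1 / (\<theta> + i)\<close>:
  \<open>D (k + 2)\<close> is distributed as \<open>1 + B\<^sub>1 + \<dots> + B\<^sub>k\<close> with independent \<open>B\<^sub>i \<sim> Bernoulli(p i)\<close>.
  Mean and variance are therefore harmonic-type sums, whose asymptotics are given by the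
  digamma and trigamma functions. The characteristic function of the standardised depth is a
  product of centred Bernoulli characteristic functions, each within \<open>O(p i |s|\<^sup>3)\<close> of the
  matching Gaussian factor; as the variance tends to infinity, Levy's continuity theorem gives
  the CLT. For the Poisson approximation we use Stein's method: the Stein operator of
  \<open>Poisson(\<lambda>)\<close>, \<open>\<lambda> = 1 + \<Sum> p i\<close>, applied to \<open>q k\<close> is the discrete derivative of an explicit
  nonnegative sequence of total mass \<open>1 + \<Sum> (p i)\<^sup>2\<close>, while each increment of a Stein solution
  contributes at most \<open>2 / \<lambda>\<close>; so \<open>d\<^sub>T\<^sub>V \<le> 2 (1 + \<Sum> (p i)\<^sup>2) / \<lambda> = O(1 / log n)\<close>.
\<close>

section \<open>The depth recursion\<close>

lemma pmf_parent_pmf: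
  assumes "\<theta> > 0" "k \<ge> 1"
  shows "pmf (parent_pmf \<theta> k) j = (if j = 1 then \<theta> / (\<theta> + real k - 1)
      else if 2 \<le> j \<and> j \<le> k then 1 / (\<theta> + real k - 1) else 0)"
  unfolding parent_pmf_def
proof (rule pmf_embed_pmf)
  define w where "w j = (if j = 1 then \<theta> / (\<theta> + real k - 1)
      else if 2 \<le> j \<and> j \<le> k then 1 / (\<theta> + real k - 1) else 0)" for j
  have pos: "\<theta> + real k - 1 > 0" using assms by simp
  show "0 \<le> w j" for j
    using pos assms by (auto simp: w_def)
  have "(\<Sum>j\<in>{1..k}. w j) = \<theta> / (\<theta> + real k - 1) + (\<Sum>j\<in>{2..k}. 1 / (\<theta> + real k - 1))"
  proof -
    have "{1..k} = insert 1 {2..k}" using assms by auto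
    then show ?thesis by (simp add: w_def)
  qed
  also have "\<dots> = 1"
    using assms pos by (simp add: of_nat_diff add_divide_distrib[symmetric])
  finally have "(\<Sum>j\<in>{1..k}. w j) = 1" .
  moreover have "(\<integral>\<^sup>+ j. ennreal (w j) \<partial>count_space UNIV) = ennreal (\<Sum>j\<in>{1..k}. w j)"
    using assms pos
    by (subst nn_integral_count_space'[of "{1..k}"]) (auto simp: w_def intro!: sum_ennreal)
  ultimately show "(\<integral>\<^sup>+ j. ennreal (w j) \<partial>count_space UNIV) = 1"
    by simp
qed

lemma set_parent_pmf:
  assumes "\<theta> > 0" "k \<ge> 1"
  shows "set_pmf (parent_pmf \<theta> k) \<subseteq> {1..k}"
  using pmf_parent_pmf[OF assms] assms by (auto simp: set_pmf_iff split: if_splits)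

definition wf_parent_map :: "nat \<Rightarrow> (nat \<Rightarrow> nat) \<Rightarrow> bool" where
  "wf_parent_map n p \<longleftrightarrow> (\<forall>i. 2 \<le> i \<and> i \<le> n \<longrightarrow> 1 \<le> p i \<and> p i < i)"

lemma wf_parent_map_hoppe_tree:
  "\<theta> > 0 \<Longrightarrow> p \<in> set_pmf (hoppe_tree \<theta> n) \<Longrightarrow> wf_parent_map n p"
proof (induction \<theta> n arbitrary: p rule: hoppe_tree.induct)
  case (3 \<theta> k)
  from 3(3) obtain p0 x where p0: "p0 \<in> set_pmf (hoppe_tree \<theta> (Suc k))"
    and x: "x \<in> set_pmf (parent_pmf \<theta> (Suc k))" and p: "p = p0(Suc (Suc k) := x)"
    by auto
  have "wf_parent_map (Suc k) p0" using 3(1,2) p0 by blast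
  moreover have "x \<in> {1..Suc k}" using set_parent_pmf[of \<theta> "Suc k"] 3(2) x by auto
  ultimately show ?case unfolding p wf_parent_map_def by (auto simp: le_Suc_eq)
qed (auto simp: wf_parent_map_def)

text \<open>Along a well-formed parent map labels strictly decrease, so fuel \<open>j\<close> suffices for node \<open>j\<close>.\<close>

lemma depth_fuel_eq:
  assumes "wf_parent_map n p" "j \<le> n" "j \<le> f" "j \<le> g"
  shows "depth_fuel p f j = depth_fuel p g j"
  using assms(2-)
proof (induction j arbitrary: f g rule: less_induct)
  case (less j)
  show ?case
  proof (cases "j \<le> 1")
    case True
    then show ?thesis by (cases f; cases g) auto
  next
    case False
    then obtain f' g' where f: "f = Suc f'" and g: "g = Suc g'"
      using less.prems by (cases f; cases g) auto
    have "p j < j" using assms(1) False less.prems unfolding wf_parent_map_def by auto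
    then have "depth_fuel p f' (p j) = depth_fuel p g' (p j)"
      using less.IH[of "p j" f' g'] less.prems f g by auto
    then show ?thesis using False f g by simp
  qed
qed

lemma depth_root: "j \<le> 1 \<Longrightarrow> depth p j = 0"
  by (cases j) (auto simp: depth_def)

lemma depth_parent:
  assumes "wf_parent_map n p" "2 \<le> j" "j \<le> n"
  shows "depth p j = Suc (depth p (p j))"
proof -
  obtain j' where j: "j = Suc j'" using assms by (cases j) auto
  have pj: "p j < j" using assms unfolding wf_parent_map_def by auto
  have "depth p j = Suc (depth_fuel p j' (p j))" using assms j by (simp add: depth_def)
  also have "depth_fuel p j' (p j) = depth_fuel p (p j) (p j)"
    by (rule depth_fuel_eq[OF assms(1)]) (use pj j assms in auto)
  finally show ?thesis by (simp add: depth_def)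
qed

lemma depth_fun_upd:
  assumes "wf_parent_map n p" "n < m" "j \<le> n"
  shows "depth (p(m := x)) j = depth p j"
  using assms(3)
proof (induction j rule: less_induct)
  case (less j)
  show ?case
  proof (cases "j \<le> 1")
    case True then show ?thesis by (simp add: depth_root)
  next
    case False
    have wf: "wf_parent_map n (p(m := x))" using assms unfolding wf_parent_map_def by auto
    have pj: "p j < j" using assms(1) False less.prems unfolding wf_parent_map_def by auto
    have "depth (p(m := x)) j = Suc (depth (p(m := x)) ((p(m := x)) j))"
      by (rule depth_parent[OF wf]) (use False less.prems in auto)
    also have "(p(m := x)) j = p j" using less.prems assms by auto
    also have "depth (p(m := x)) (p j) = depth p (p j)"
      using less.IH[of "p j"] pj less.prems by (simp add: fun_upd_def)
    also have "Suc (depth p (p j)) = depth p j"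
      by (rule depth_parent[OF assms(1), symmetric]) (use False less.prems in auto)
    finally show ?thesis .
  qed
qed

lemma depth_new_node:
  assumes "wf_parent_map (Suc k) p" "1 \<le> x" "x \<le> Suc k"
  shows "depth (p(Suc (Suc k) := x)) (Suc (Suc k)) = (if x = 1 then 1 else Suc (depth p x))"
proof -
  let ?p = "p(Suc (Suc k) := x)"
  have "wf_parent_map (Suc (Suc k)) ?p"
    using assms unfolding wf_parent_map_def by (auto simp: le_Suc_eq)
  then have "depth ?p (Suc (Suc k)) = Suc (depth ?p x)"
    using depth_parent[of "Suc (Suc k)" ?p "Suc (Suc k)"] by simp
  also have "depth ?p x = (if x = 1 then 0 else depth p x)"
    using depth_fun_upd[OF assms(1), of "Suc (Suc k)" x x] assms by (auto simp: depth_root)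
  finally show ?thesis by (simp add: fun_upd_def)
qed

lemma map_depth_hoppe_tree:
  assumes "\<theta> > 0" "j \<le> n"
  shows "map_pmf (\<lambda>p. depth p j) (hoppe_tree \<theta> n) = depth_law \<theta> j"
  using assms(2)
proof (induction n rule: dec_induct)
  case base then show ?case by (simp add: depth_law_def)
next
  case (step n)
  show ?case
  proof (cases n)
    case 0
    then show ?thesis using step by (simp add: depth_law_def)
  next
    case (Suc k)
    have "map_pmf (\<lambda>p. depth p j) (hoppe_tree \<theta> (Suc n)) =
      hoppe_tree \<theta> (Suc k) \<bind>
        (\<lambda>p. parent_pmf \<theta> (Suc k) \<bind> (\<lambda>x. return_pmf (depth (p(Suc (Suc k) := x)) j)))"
      by (simp add: Suc map_bind_pmf map_return_pmf)
    also have "\<dots> = hoppe_tree \<theta> (Suc k) \<bind> (\<lambda>p. return_pmf (depth p j))"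
    proof (rule bind_pmf_cong[OF refl])
      fix p assume "p \<in> set_pmf (hoppe_tree \<theta> (Suc k))"
      then have "wf_parent_map (Suc k) p" by (rule wf_parent_map_hoppe_tree[OF assms(1)])
      then show "parent_pmf \<theta> (Suc k) \<bind> (\<lambda>x. return_pmf (depth (p(Suc (Suc k) := x)) j))
          = return_pmf (depth p j)"
        using depth_fun_upd[of "Suc k" p "Suc (Suc k)" j] step Suc by (simp add: bind_pmf_const)
    qed
    also have "\<dots> = map_pmf (\<lambda>p. depth p j) (hoppe_tree \<theta> n)"
      by (simp add: Suc map_pmf_def)
    finally show ?thesis using step by simp
  qed
qed

lemma depth_law_Suc_Suc:
  assumes "\<theta> > 0"
  shows "depth_law \<theta> (Suc (Suc k)) = parent_pmf \<theta> (Suc k) \<bind>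
     (\<lambda>x. if x = 1 then return_pmf 1 else map_pmf Suc (depth_law \<theta> x))"
proof -
  have parent: "x \<in> {1..Suc k}" if "x \<in> set_pmf (parent_pmf \<theta> (Suc k))" for x
    using set_parent_pmf[of \<theta> "Suc k"] assms that by auto
  have "depth_law \<theta> (Suc (Suc k)) = hoppe_tree \<theta> (Suc k) \<bind> (\<lambda>p. parent_pmf \<theta> (Suc k) \<bind>
      (\<lambda>x. return_pmf (depth (p(Suc (Suc k) := x)) (Suc (Suc k)))))"
    by (simp add: depth_law_def map_bind_pmf map_return_pmf)
  also have "\<dots> = hoppe_tree \<theta> (Suc k) \<bind> (\<lambda>p. parent_pmf \<theta> (Suc k) \<bind>
      (\<lambda>x. return_pmf (if x = 1 then 1 else Suc (depth p x))))"
    using depth_new_node[OF wf_parent_map_hoppe_tree[OF assms]] parent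
    by (intro bind_pmf_cong refl) auto
  also have "\<dots> = parent_pmf \<theta> (Suc k) \<bind> (\<lambda>x. hoppe_tree \<theta> (Suc k) \<bind>
      (\<lambda>p. return_pmf (if x = 1 then 1 else Suc (depth p x))))"
    by (rule bind_commute_pmf)
  also have "\<dots> = parent_pmf \<theta> (Suc k) \<bind>
      (\<lambda>x. if x = 1 then return_pmf 1 else map_pmf Suc (depth_law \<theta> x))"
  proof (rule bind_pmf_cong[OF refl])
    fix x assume "x \<in> set_pmf (parent_pmf \<theta> (Suc k))"
    then have "map_pmf Suc (map_pmf (\<lambda>p. depth p x) (hoppe_tree \<theta> (Suc k)))
        = map_pmf Suc (depth_law \<theta> x)"
      using map_depth_hoppe_tree[OF assms, of x "Suc k"] parent by simp
    then show "hoppe_tree \<theta> (Suc k) \<bind> (\<lambda>p. return_pmf (if x = 1 then 1 else Suc (depth p x))) =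
        (if x = 1 then return_pmf 1 else map_pmf Suc (depth_law \<theta> x))"
      by (simp add: bind_pmf_const map_pmf_def bind_assoc_pmf bind_return_pmf)
  qed
  finally show ?thesis .
qed

section \<open>The law of the depth as a Bernoulli convolution\<close>

definition seq_shift :: "(nat \<Rightarrow> real) \<Rightarrow> nat \<Rightarrow> real" where
  "seq_shift f d = (if d = 0 then 0 else f (d - 1))"

lemma seq_shift_0 [simp]: "seq_shift f 0 = 0" and seq_shift_Suc [simp]: "seq_shift f (Suc d) = f d"
  by (simp_all add: seq_shift_def)

lemma sum_atMost_Suc_seq_shift: "(\<Sum>d\<le>Suc N. seq_shift f d) = (\<Sum>d\<le>N. f d)"
  by (subst sum.atMost_Suc_shift) simp

lemma pmf_map_pmf_Suc: "pmf (map_pmf Suc M) d = seq_shift (pmf M) d"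
proof (cases d)
  case 0
  then show ?thesis by (simp add: pmf_map vimage_def)
next
  case (Suc d')
  then show ?thesis by (simp add: pmf_map_inj')
qed

text \<open>\<open>depth_pmf \<theta> k\<close> is the law of the depth of node \<open>k + 2\<close>; with this offset \<open>k\<close> is the
  number of Bernoulli summands.\<close>

definition depth_pmf :: "real \<Rightarrow> nat \<Rightarrow> nat \<Rightarrow> real" where
  "depth_pmf \<theta> k = pmf (depth_law \<theta> (Suc (Suc k)))"

lemma depth_pmf_nonneg: "depth_pmf \<theta> k d \<ge> 0"
  by (simp add: depth_pmf_def)

lemma depth_pmf_balance:
  assumes "\<theta> > 0"
  shows "(\<theta> + real k) * depth_pmf \<theta> k d
    = \<theta> * (if d = 1 then 1 else 0) + (\<Sum>i<k. seq_shift (depth_pmf \<theta> i) d)"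
proof -
  let ?F = "\<lambda>x. if x = 1 then return_pmf 1 else map_pmf Suc (depth_law \<theta> x)"
  let ?w = "\<lambda>x. pmf (?F x) d * pmf (parent_pmf \<theta> (Suc k)) x"
  have pos: "\<theta> + real k > 0" using assms by simp
  have parents: "{1..Suc k} = insert 1 ((\<lambda>i. Suc (Suc i)) ` {..<k})"
  proof (intro equalityI subsetI)
    fix x assume "x \<in> {1..Suc k}"
    then show "x \<in> insert 1 ((\<lambda>i. Suc (Suc i)) ` {..<k})"
      by (cases "x = 1") (auto simp: image_iff intro!: bexI[of _ "x - 2"])
  qed auto
  have "depth_pmf \<theta> k d = (\<integral>x. pmf (?F x) d \<partial>measure_pmf (parent_pmf \<theta> (Suc k)))"
    unfolding depth_pmf_def depth_law_Suc_Suc[OF assms] pmf_bind ..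
  also have "\<dots> = (\<Sum>x\<in>{1..Suc k}. ?w x)"
    by (rule integral_measure_pmf_real) (use set_parent_pmf[of \<theta> "Suc k"] assms in auto)
  also have "\<dots> = ?w 1 + (\<Sum>i<k. ?w (Suc (Suc i)))"
    unfolding parents by (subst sum.insert) (auto simp: sum.reindex inj_on_def)
  also have "\<dots> = (\<theta> * (if d = 1 then 1 else 0) + (\<Sum>i<k. seq_shift (depth_pmf \<theta> i) d)) / (\<theta> + real k)"
    using assms
    by (simp add: pmf_parent_pmf pmf_map_pmf_Suc depth_pmf_def add_divide_distrib sum_divide_distrib)
  finally show ?thesis using pos by (simp add: field_simps)
qed

lemma depth_pmf_0: "\<theta> > 0 \<Longrightarrow> depth_pmf \<theta> 0 d = (if d = 1 then 1 else 0)"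
  using depth_pmf_balance[of \<theta> 0 d] by auto

lemma depth_pmf_Suc:
  assumes "\<theta> > 0"
  shows "depth_pmf \<theta> (Suc k) d = (1 - 1 / (\<theta> + real k + 1)) * depth_pmf \<theta> k d
    + 1 / (\<theta> + real k + 1) * seq_shift (depth_pmf \<theta> k) d"
proof -
  define x where "x = \<theta> + real k + 1"
  have x: "x > 0" using assms by (simp add: x_def)
  have "x * depth_pmf \<theta> (Suc k) d = (x - 1) * depth_pmf \<theta> k d + seq_shift (depth_pmf \<theta> k) d"
    using depth_pmf_balance[OF assms, of "Suc k" d] depth_pmf_balance[OF assms, of k d]
    by (simp add: x_def algebra_simps)
  then have "depth_pmf \<theta> (Suc k) d = ((x - 1) * depth_pmf \<theta> k d + seq_shift (depth_pmf \<theta> k) d) / x"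
    using x by (simp add: field_simps)
  also have "\<dots> = (1 - 1 / x) * depth_pmf \<theta> k d + 1 / x * seq_shift (depth_pmf \<theta> k) d"
    using x by (simp add: add_divide_distrib diff_divide_distrib left_diff_distrib)
  finally show ?thesis by (simp add: x_def)
qed

lemma depth_pmf_eq_0: "\<theta> > 0 \<Longrightarrow> d = 0 \<or> d > Suc k \<Longrightarrow> depth_pmf \<theta> k d = 0"
proof (induction k arbitrary: d)
  case 0 then show ?case by (auto simp: depth_pmf_0)
next
  case (Suc k)
  have "depth_pmf \<theta> k d = 0" "seq_shift (depth_pmf \<theta> k) d = 0"
    using Suc by (auto simp: seq_shift_def)
  then show ?case using depth_pmf_Suc[OF Suc.prems(1)] by simp
qed

definition depth_expect :: "real \<Rightarrow> nat \<Rightarrow> (nat \<Rightarrow> 'a::real_vector) \<Rightarrow> 'a" where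
  "depth_expect \<theta> k f = (\<Sum>d\<le>Suc k. depth_pmf \<theta> k d *\<^sub>R f d)"

lemma expectation_depth_law:
  fixes f :: "nat \<Rightarrow> 'b::{banach, second_countable_topology}"
  assumes "\<theta> > 0"
  shows "measure_pmf.expectation (depth_law \<theta> (Suc (Suc k))) f = depth_expect \<theta> k f"
proof -
  have "measure_pmf.expectation (depth_law \<theta> (Suc (Suc k))) f
      = (\<Sum>a\<le>Suc k. pmf (depth_law \<theta> (Suc (Suc k))) a *\<^sub>R f a)"
  proof (rule integral_measure_pmf)
    fix a assume "a \<in> set_pmf (depth_law \<theta> (Suc (Suc k)))"
    then have "depth_pmf \<theta> k a \<noteq> 0" by (simp add: depth_pmf_def set_pmf_iff)
    then show "a \<in> {..Suc k}" using depth_pmf_eq_0[OF assms, of a k] by (meson atMost_iff not_le)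
  qed simp
  then show ?thesis by (simp add: depth_expect_def depth_pmf_def)
qed

lemma depth_expect_0: "\<theta> > 0 \<Longrightarrow> depth_expect \<theta> 0 f = f 1"
  by (simp add: depth_expect_def depth_pmf_0)

lemma depth_expect_Suc:
  assumes "\<theta> > 0"
  shows "depth_expect \<theta> (Suc k) f = (1 - 1 / (\<theta> + real k + 1)) *\<^sub>R depth_expect \<theta> k f
     + (1 / (\<theta> + real k + 1)) *\<^sub>R depth_expect \<theta> k (\<lambda>d. f (Suc d))"
proof -
  let ?c = "1 / (\<theta> + real k + 1)"
  have "depth_expect \<theta> (Suc k) f = (\<Sum>d\<le>Suc (Suc k). ((1 - ?c) * depth_pmf \<theta> k d) *\<^sub>R f d)
      + (\<Sum>d\<le>Suc (Suc k). (?c * seq_shift (depth_pmf \<theta> k) d) *\<^sub>R f d)"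
    unfolding depth_expect_def depth_pmf_Suc[OF assms] scaleR_add_left sum.distrib ..
  also have "(\<Sum>d\<le>Suc (Suc k). ((1 - ?c) * depth_pmf \<theta> k d) *\<^sub>R f d)
     = (1 - ?c) *\<^sub>R depth_expect \<theta> k f"
    using depth_pmf_eq_0[OF assms, of "Suc (Suc k)" k] unfolding depth_expect_def
    by (simp add: scaleR_sum_right del: sum.atMost_Suc) (simp add: sum.atMost_Suc[of _ "Suc k"])
  also have "(\<Sum>d\<le>Suc (Suc k). (?c * seq_shift (depth_pmf \<theta> k) d) *\<^sub>R f d)
     = ?c *\<^sub>R depth_expect \<theta> k (\<lambda>d. f (Suc d))"
    unfolding depth_expect_def
    by (subst sum.atMost_Suc_shift) (simp add: scaleR_sum_right del: sum.atMost_Suc)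
  finally show ?thesis .
qed

lemma depth_expect_add: "depth_expect \<theta> k (\<lambda>d. f d + g d) = depth_expect \<theta> k f + depth_expect \<theta> k g"
  unfolding depth_expect_def by (simp add: scaleR_add_right sum.distrib del: sum.atMost_Suc)

lemma depth_expect_mult:
  fixes c :: "'a::real_algebra"
  shows "depth_expect \<theta> k (\<lambda>d. c * f d) = c * depth_expect \<theta> k f"
  unfolding depth_expect_def by (simp add: sum_distrib_left mult_scaleR_right del: sum.atMost_Suc)

lemma depth_expect_const: "\<theta> > 0 \<Longrightarrow> depth_expect \<theta> k (\<lambda>_. c) = c"
proof (induction k)
  case 0 then show ?case by (simp add: depth_expect_0)
next
  case (Suc k)
  then show ?case by (simp add: depth_expect_Suc scaleR_add_left[symmetric])
qed

lemma sum_depth_pmf: "\<theta> > 0 \<Longrightarrow> N \<ge> Suc k \<Longrightarrow> (\<Sum>d\<le>N. depth_pmf \<theta> k d) = 1"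
proof -
  assume \<theta>: "\<theta> > 0" and N: "N \<ge> Suc k"
  have "(\<Sum>d\<le>N. depth_pmf \<theta> k d) = (\<Sum>d\<le>Suc k. depth_pmf \<theta> k d)"
    by (rule sum.mono_neutral_right) (use N depth_pmf_eq_0[OF \<theta>] in auto)
  also have "\<dots> = 1" using depth_expect_const[OF \<theta>, of k "1::real"] by (simp add: depth_expect_def)
  finally show ?thesis .
qed

section \<open>Mean and variance\<close>

definition harm_sum :: "real \<Rightarrow> nat \<Rightarrow> real" where
  "harm_sum \<theta> k = (\<Sum>i=1..k. 1 / (\<theta> + real i))"

definition harm_sum2 :: "real \<Rightarrow> nat \<Rightarrow> real" where
  "harm_sum2 \<theta> k = (\<Sum>i=1..k. (1 / (\<theta> + real i))^2)"

lemma harm_sum_Suc: "harm_sum \<theta> (Suc k) = harm_sum \<theta> k + 1 / (\<theta> + real k + 1)"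
  by (simp add: harm_sum_def add_ac)

lemma harm_sum2_Suc: "harm_sum2 \<theta> (Suc k) = harm_sum2 \<theta> k + (1 / (\<theta> + real k + 1))^2"
  by (simp add: harm_sum2_def add_ac)

lemma harm_sum_nonneg: "\<theta> > 0 \<Longrightarrow> harm_sum \<theta> k \<ge> 0"
  by (simp add: harm_sum_def sum_nonneg)

lemma harm_sum2_nonneg: "harm_sum2 \<theta> k \<ge> 0"
  by (simp add: harm_sum2_def sum_nonneg)

lemma depth_expect_real: "\<theta> > 0 \<Longrightarrow> depth_expect \<theta> k real = 1 + harm_sum \<theta> k"
proof (induction k)
  case 0 then show ?case by (simp add: depth_expect_0 harm_sum_def)
next
  case (Suc k)
  define c where "c = 1 / (\<theta> + real k + 1)"
  have "depth_expect \<theta> k (\<lambda>d. real (Suc d)) = 1 + depth_expect \<theta> k real"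
    using depth_expect_add[of \<theta> k "\<lambda>_. 1" real] depth_expect_const[OF Suc.prems, of k 1] by simp
  then have "depth_expect \<theta> (Suc k) real = (1 - c) * (1 + harm_sum \<theta> k) + c * (2 + harm_sum \<theta> k)"
    using Suc unfolding depth_expect_Suc[OF Suc.prems] c_def[symmetric] by simp
  also have "\<dots> = 1 + (harm_sum \<theta> k + c)"
    by (simp add: algebra_simps)
  finally show ?case by (simp add: harm_sum_Suc c_def)
qed

lemma depth_expect_square:
  "\<theta> > 0 \<Longrightarrow> depth_expect \<theta> k (\<lambda>d. (real d)^2) = harm_sum \<theta> k - harm_sum2 \<theta> k + (1 + harm_sum \<theta> k)^2"
proof (induction k)
  case 0 then show ?case by (simp add: depth_expect_0 harm_sum_def harm_sum2_def)
next
  case (Suc k)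
  define c where "c = 1 / (\<theta> + real k + 1)"
  have "depth_expect \<theta> k (\<lambda>d. (real (Suc d))^2)
      = depth_expect \<theta> k (\<lambda>d. (real d)^2 + (2 * real d + 1))"
    by (simp add: power2_eq_square algebra_simps)
  also have "\<dots> = depth_expect \<theta> k (\<lambda>d. (real d)^2) + 2 * depth_expect \<theta> k real + 1"
    by (simp add: depth_expect_add depth_expect_mult depth_expect_const[OF Suc.prems])
  finally have "depth_expect \<theta> (Suc k) (\<lambda>d. (real d)^2)
      = (1 - c) * depth_expect \<theta> k (\<lambda>d. (real d)^2)
        + c * (depth_expect \<theta> k (\<lambda>d. (real d)^2) + 2 * (1 + harm_sum \<theta> k) + 1)"
    using depth_expect_real[OF Suc.prems, of k]
    unfolding depth_expect_Suc[OF Suc.prems] c_def[symmetric] by simp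
  moreover have "harm_sum \<theta> (Suc k) = harm_sum \<theta> k + c" "harm_sum2 \<theta> (Suc k) = harm_sum2 \<theta> k + c^2"
    by (simp_all add: harm_sum_Suc harm_sum2_Suc c_def)
  ultimately show ?case
    using Suc by (simp add: algebra_simps power2_eq_square)
qed

lemma depth_expect_centred_square:
  assumes "\<theta> > 0"
  shows "depth_expect \<theta> k (\<lambda>d. (real d - (1 + harm_sum \<theta> k))^2) = harm_sum \<theta> k - harm_sum2 \<theta> k"
proof -
  let ?m = "1 + harm_sum \<theta> k"
  have "depth_expect \<theta> k (\<lambda>d. (real d - ?m)^2)
      = depth_expect \<theta> k (\<lambda>d. (real d)^2 + ((-2 * ?m) * real d + ?m^2))"
    by (simp add: power2_eq_square algebra_simps)
  also have "\<dots> = depth_expect \<theta> k (\<lambda>d. (real d)^2) + ((-2 * ?m) * depth_expect \<theta> k real + ?m^2)"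
    by (simp add: depth_expect_add depth_expect_mult depth_expect_const[OF assms])
  finally show ?thesis
    using depth_expect_square[OF assms, of k] depth_expect_real[OF assms, of k]
    by (simp add: power2_eq_square algebra_simps)
qed

lemma expectation_depth_law_real:
  "\<theta> > 0 \<Longrightarrow> measure_pmf.expectation (depth_law \<theta> (Suc (Suc k))) real = 1 + harm_sum \<theta> k"
  by (simp add: expectation_depth_law depth_expect_real)

lemma variance_depth_law_real:
  "\<theta> > 0 \<Longrightarrow> measure_pmf.variance (depth_law \<theta> (Suc (Suc k))) real = harm_sum \<theta> k - harm_sum2 \<theta> k"
  by (simp add: expectation_depth_law depth_expect_real depth_expect_centred_square)

lemma harm_sum_minus_ln_tendsto:
  assumes "\<theta> > 0"
  shows "(\<lambda>k. harm_sum \<theta> k - ln (real k) + Digamma (\<theta> + 1)) \<longlonglongrightarrow> 0"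
proof -
  have "harm_sum \<theta> k = (\<Sum>j<k. inverse ((\<theta> + 1) + real j))" for k
    unfolding harm_sum_def One_nat_def sum.atLeast1_atMost_eq by (simp add: divide_inverse add_ac)
  moreover have "(\<lambda>k. ln (real k) - (\<Sum>j<k. inverse ((\<theta> + 1) + real j))) \<longlonglongrightarrow> Digamma (\<theta> + 1)"
    using Digamma_LIMSEQ[of "\<theta> + 1"] assms by simp
  ultimately have "(\<lambda>k. Digamma (\<theta> + 1) - (ln (real k) - harm_sum \<theta> k))
      \<longlonglongrightarrow> Digamma (\<theta> + 1) - Digamma (\<theta> + 1)"
    by (intro tendsto_intros) simp
  then show ?thesis by (simp add: algebra_simps)
qed

lemma harm_sum2_tendsto: "\<theta> > 0 \<Longrightarrow> harm_sum2 \<theta> \<longlonglongrightarrow> Polygamma 1 (\<theta> + 1)"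
proof -
  assume "\<theta> > 0"
  then have "(\<lambda>j. inverse (((\<theta> + 1) + real j)^Suc 1)) sums ((-1) ^ Suc 1 * Polygamma 1 (\<theta> + 1) / fact 1)"
    by (intro Polygamma_LIMSEQ) auto
  moreover have "harm_sum2 \<theta> = (\<lambda>k. \<Sum>j<k. inverse (((\<theta> + 1) + real j)^2))"
    unfolding harm_sum2_def One_nat_def sum.atLeast1_atMost_eq
    by (simp add: divide_inverse add_ac power_inverse)
  ultimately show ?thesis unfolding sums_def by (simp add: power2_eq_square)
qed

lemma harm_sum2_le_Polygamma: "\<theta> > 0 \<Longrightarrow> harm_sum2 \<theta> k \<le> Polygamma 1 (\<theta> + 1)"
  by (rule incseq_le[OF _ harm_sum2_tendsto]) (auto intro!: incseq_SucI simp: harm_sum2_Suc)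

lemma expectation_depth_law_asymp:
  assumes "\<theta> > 0"
  shows "(\<lambda>n. measure_pmf.expectation (depth_law \<theta> n) real - (ln (real n) - Digamma (\<theta> + 1) + 1)) \<longlonglongrightarrow> 0"
proof (rule LIMSEQ_offset[where k = 2])
  have "(\<lambda>k. (harm_sum \<theta> k - ln (real k) + Digamma (\<theta> + 1)) + (ln (real k) - ln (real (k + 2))))
      \<longlonglongrightarrow> 0 + 0"
    by (intro tendsto_add harm_sum_minus_ln_tendsto[OF assms]) real_asymp
  then show "(\<lambda>k. measure_pmf.expectation (depth_law \<theta> (k + 2)) real
      - (ln (real (k + 2)) - Digamma (\<theta> + 1) + 1)) \<longlonglongrightarrow> 0"
    unfolding add_2_eq_Suc' expectation_depth_law_real[OF assms] by (simp add: algebra_simps)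
qed

lemma variance_depth_law_asymp:
  assumes "\<theta> > 0"
  shows "(\<lambda>n. measure_pmf.variance (depth_law \<theta> n) real
    - (ln (real n) - Digamma (\<theta> + 1) - Polygamma 1 (\<theta> + 1))) \<longlonglongrightarrow> 0"
proof (rule LIMSEQ_offset[where k = 2])
  have "(\<lambda>k. (harm_sum \<theta> k - ln (real k) + Digamma (\<theta> + 1)) + (ln (real k) - ln (real (k + 2)))
      - (harm_sum2 \<theta> k - Polygamma 1 (\<theta> + 1))) \<longlonglongrightarrow> 0 + 0 - 0"
    using harm_sum2_tendsto[OF assms]
    by (intro tendsto_diff tendsto_add harm_sum_minus_ln_tendsto[OF assms])
      (real_asymp, simp add: LIM_zero_iff)
  then show "(\<lambda>k. measure_pmf.variance (depth_law \<theta> (k + 2)) real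
      - (ln (real (k + 2)) - Digamma (\<theta> + 1) - Polygamma 1 (\<theta> + 1))) \<longlonglongrightarrow> 0"
    unfolding add_2_eq_Suc' variance_depth_law_real[OF assms] by (simp add: algebra_simps)
qed

section \<open>Central limit theorem\<close>

lemma iexp_taylor2: "cmod (iexp x - (1 + \<i> * of_real x - of_real (x^2 / 2))) \<le> \<bar>x\<bar>^3 / 6"
proof -
  have "(\<Sum>k\<le>2. (\<i> * complex_of_real x)^k / fact k) = 1 + \<i> * of_real x - of_real (x^2 / 2)"
    by (simp add: numeral_2_eq_2 power2_eq_square field_simps)
  moreover have "fact (Suc 2) = (6::real)" by (simp add: numeral_eq_Suc)
  ultimately show ?thesis using iexp_approx1[of x 2] by (simp add: numeral_eq_Suc)
qed

lemma abs_exp_neg_minus_linear: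
  assumes "x \<ge> (0::real)"
  shows "\<bar>exp (- x) - (1 - x)\<bar> \<le> x^2 / 2"
proof -
  have "(\<lambda>y. 1 - y + y^2 / 2 - exp (- y)) 0 \<le> (\<lambda>y. 1 - y + y^2 / 2 - exp (- y)) x"
  proof (rule DERIV_nonneg_imp_nondecreasing[OF assms])
    fix y :: real
    have "DERIV (\<lambda>y. 1 - y + y^2 / 2 - exp (- y)) y :> (- 1 + y + exp (- y))"
      by (auto intro!: derivative_eq_intros)
    moreover have "- 1 + y + exp (- y) \<ge> 0" using exp_ge_add_one_self[of "- y"] by simp
    ultimately show "\<exists>d. DERIV (\<lambda>y. 1 - y + y^2 / 2 - exp (- y)) y :> d \<and> d \<ge> 0" by blast
  qed
  then show ?thesis using exp_ge_add_one_self[of "- x"] by simp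
qed

text \<open>The characteristic function of \<open>B - p\<close> for \<open>B \<sim> Bernoulli(p)\<close>.\<close>

definition bernoulli_char :: "real \<Rightarrow> real \<Rightarrow> complex" where
  "bernoulli_char p s = of_real (1 - p) * iexp (- s * p) + of_real p * iexp (s * (1 - p))"

lemma norm_bernoulli_char_le_1:
  assumes "0 \<le> p" "p \<le> 1"
  shows "cmod (bernoulli_char p s) \<le> 1"
proof -
  have "cmod (bernoulli_char p s)
      \<le> cmod (of_real (1 - p) * iexp (- s * p)) + cmod (of_real p * iexp (s * (1 - p)))"
    unfolding bernoulli_char_def by (rule norm_triangle_ineq)
  also have "\<dots> = (1 - p) + p"
    using assms by (simp add: norm_mult del: of_real_diff)
  finally show ?thesis by simp
qed

lemma bernoulli_char_approx:
  assumes p: "0 \<le> p" "p \<le> 1"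
  shows "cmod (bernoulli_char p s - of_real (1 - p * (1 - p) * s^2 / 2)) \<le> p * (1 - p) * \<bar>s\<bar>^3 / 6"
proof -
  define T where "T x = 1 + \<i> * of_real x - of_real (x^2 / 2)" for x
  have "of_real (1 - p * (1 - p) * s^2 / 2) = of_real (1 - p) * T (- s * p) + of_real p * T (s * (1 - p))"
    by (simp add: T_def complex_eq_iff field_simps power2_eq_square)
  then have "bernoulli_char p s - of_real (1 - p * (1 - p) * s^2 / 2) =
      of_real (1 - p) * (iexp (- s * p) - T (- s * p)) + of_real p * (iexp (s * (1 - p)) - T (s * (1 - p)))"
    unfolding bernoulli_char_def by (simp add: algebra_simps)
  also have "cmod \<dots> \<le> (1 - p) * cmod (iexp (- s * p) - T (- s * p))
      + p * cmod (iexp (s * (1 - p)) - T (s * (1 - p)))"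
    using p by (intro order.trans[OF norm_triangle_ineq]) (simp add: norm_mult del: of_real_diff)
  also have "\<dots> \<le> (1 - p) * (\<bar>- s * p\<bar>^3 / 6) + p * (\<bar>s * (1 - p)\<bar>^3 / 6)"
    using p unfolding T_def by (intro add_mono mult_left_mono iexp_taylor2) auto
  also have "\<dots> = p * (1 - p) * \<bar>s\<bar>^3 * (p^2 + (1 - p)^2) / 6"
  proof -
    have "\<bar>s * (1 - p)\<bar> = \<bar>s\<bar> * (1 - p)" "\<bar>- s * p\<bar> = \<bar>s\<bar> * p"
      using p by (simp_all add: abs_mult)
    then show ?thesis by (simp only:) (simp add: field_simps power2_eq_square power3_eq_cube)
  qed
  also have "\<dots> \<le> p * (1 - p) * \<bar>s\<bar>^3 * 1 / 6"
  proof -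
    have "p * p \<le> p * 1" using p by (intro mult_left_mono) auto
    then have "p^2 + (1 - p)^2 \<le> 1" by (simp add: power2_eq_square algebra_simps)
    then show ?thesis using p by (intro divide_right_mono mult_left_mono) auto
  qed
  finally show ?thesis by simp
qed

lemma depth_expect_iexp:
  assumes "\<theta> > 0"
  shows "depth_expect \<theta> k (\<lambda>d. iexp (s * (real d - (1 + harm_sum \<theta> k))))
    = (\<Prod>i=1..k. bernoulli_char (1 / (\<theta> + real i)) s)"
proof (induction k)
  case 0 then show ?case by (simp add: depth_expect_0[OF assms] harm_sum_def)
next
  case (Suc k)
  define c where "c = 1 / (\<theta> + real k + 1)"
  define m where "m = 1 + harm_sum \<theta> k"
  have shift_mean: "iexp (s * (real d - (m + c))) = iexp (- s * c) * iexp (s * (real d - m))" for d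
    by (simp add: algebra_simps flip: exp_add)
  have shift_mean_Suc:
    "iexp (s * (real (Suc d) - (m + c))) = iexp (s * (1 - c)) * iexp (s * (real d - m))" for d
    by (simp add: algebra_simps flip: exp_add)
  have "depth_expect \<theta> (Suc k) (\<lambda>d. iexp (s * (real d - (m + c)))) =
      (1 - c) *\<^sub>R depth_expect \<theta> k (\<lambda>d. iexp (s * (real d - (m + c))))
      + c *\<^sub>R depth_expect \<theta> k (\<lambda>d. iexp (s * (real (Suc d) - (m + c))))"
    unfolding depth_expect_Suc[OF assms] c_def ..
  also have "\<dots> = bernoulli_char c s * depth_expect \<theta> k (\<lambda>d. iexp (s * (real d - m)))"
    unfolding shift_mean_Suc unfolding shift_mean depth_expect_mult
    by (simp add: bernoulli_char_def scaleR_conv_of_real algebra_simps)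
  finally show ?case
    using Suc by (simp add: m_def c_def harm_sum_Suc add_ac mult.commute)
qed

lemma norm_bernoulli_char_minus_gaussian:
  assumes "0 \<le> p" "p \<le> 1"
  defines "v \<equiv> p * (1 - p)"
  shows "cmod (bernoulli_char p s - of_real (exp (- (v * s^2 / 2)))) \<le> v * \<bar>s\<bar>^3 / 6 + v * s^4 / 8"
proof -
  have v: "0 \<le> v" "v \<le> 1" using assms by (auto simp: v_def mult_le_one)
  define a where "a = 1 - v * s^2 / 2"
  have "cmod (bernoulli_char p s - of_real (exp (- (v * s^2 / 2))))
      \<le> cmod (bernoulli_char p s - of_real a) + \<bar>exp (- (v * s^2 / 2)) - a\<bar>"
    by (rule norm_diff_triangle_le[OF order.refl]) (simp flip: of_real_diff add: abs_minus_commute)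
  also have "\<dots> \<le> v * \<bar>s\<bar>^3 / 6 + (v * s^2 / 2)^2 / 2"
    unfolding a_def v_def using assms v
    by (intro add_mono bernoulli_char_approx abs_exp_neg_minus_linear) (auto simp: v_def)
  also have "(v * s^2 / 2)^2 / 2 = v^2 * s^4 / 8"
    by (simp add: power2_eq_square power4_eq_xxxx)
  also have "\<dots> \<le> v * s^4 / 8"
    using v by (intro divide_right_mono mult_right_mono) (auto simp: power2_eq_square mult_left_le_one_le)
  finally show ?thesis by simp
qed

lemma norm_prod_bernoulli_char_minus_gaussian:
  assumes \<theta>: "\<theta> > 0" and r: "r > 0" "r^2 = harm_sum \<theta> k - harm_sum2 \<theta> k"
  shows "cmod ((\<Prod>i=1..k. bernoulli_char (1 / (\<theta> + real i)) (t / r)) - of_real (exp (- (t^2) / 2)))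
     \<le> \<bar>t\<bar>^3 / (6 * r) + t^4 / (8 * r^2)"
proof -
  define p where "p i = 1 / (\<theta> + real i)" for i
  define s where "s = t / r"
  define v where "v i = p i * (1 - p i)" for i
  have p: "0 \<le> p i \<and> p i \<le> 1" if "i \<ge> 1" for i
    using that \<theta> by (auto simp: p_def divide_simps)
  have sum_v: "(\<Sum>i=1..k. v i) = r^2"
    unfolding r(2) harm_sum_def harm_sum2_def v_def p_def
    by (simp add: sum_subtractf[symmetric] algebra_simps power2_eq_square)
  have gaussian: "(\<Prod>i=1..k. complex_of_real (exp (- (v i * s^2 / 2)))) = of_real (exp (- (t^2) / 2))"
  proof -
    have "(\<Sum>i=1..k. - (v i * s^2 / 2)) = - (t^2) / 2"
      using r(1) by (simp add: sum_negf sum_divide_distrib[symmetric] sum_distrib_right[symmetric]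
          sum_v[unfolded One_nat_def] s_def power_divide)
    then show ?thesis by (simp flip: of_real_prod exp_sum)
  qed
  have "cmod ((\<Prod>i=1..k. bernoulli_char (p i) s) - (\<Prod>i=1..k. complex_of_real (exp (- (v i * s^2 / 2)))))
      \<le> (\<Sum>i=1..k. cmod (bernoulli_char (p i) s - of_real (exp (- (v i * s^2 / 2)))))"
    using p by (intro norm_prod_diff) (auto intro: norm_bernoulli_char_le_1 simp: v_def mult_le_one)
  also have "\<dots> \<le> (\<Sum>i=1..k. v i * \<bar>s\<bar>^3 / 6 + v i * s^4 / 8)"
    using p unfolding v_def by (intro sum_mono norm_bernoulli_char_minus_gaussian) auto
  also have "\<dots> = r^2 * \<bar>s\<bar>^3 / 6 + r^2 * s^4 / 8"
    by (simp add: sum.distrib sum_divide_distrib[symmetric] sum_distrib_right[symmetric]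
        sum_v[unfolded One_nat_def])
  also have "\<dots> = \<bar>t\<bar>^3 / (6 * r) + t^4 / (8 * r^2)"
    using r(1) by (simp add: s_def abs_divide power_divide field_simps power2_eq_square
        power3_eq_cube power4_eq_xxxx)
  finally show ?thesis unfolding gaussian by (simp add: p_def s_def)
qed

lemma char_depth_law_standardized:
  assumes \<theta>: "\<theta> > 0"
  shows "char (distr (measure_pmf (depth_law \<theta> (Suc (Suc k)))) borel
      (\<lambda>d. (real d - measure_pmf.expectation (depth_law \<theta> (Suc (Suc k))) real) /
           sqrt (measure_pmf.variance (depth_law \<theta> (Suc (Suc k))) real))) t
    = (\<Prod>i=1..k. bernoulli_char (1 / (\<theta> + real i)) (t / sqrt (harm_sum \<theta> k - harm_sum2 \<theta> k)))"
proof -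
  define r where "r = sqrt (harm_sum \<theta> k - harm_sum2 \<theta> k)"
  have "char (distr (measure_pmf (depth_law \<theta> (Suc (Suc k)))) borel
      (\<lambda>d. (real d - measure_pmf.expectation (depth_law \<theta> (Suc (Suc k))) real) /
           sqrt (measure_pmf.variance (depth_law \<theta> (Suc (Suc k))) real))) t
     = measure_pmf.expectation (depth_law \<theta> (Suc (Suc k)))
         (\<lambda>d. iexp (t * ((real d - (1 + harm_sum \<theta> k)) / r)))"
    unfolding char_def r_def variance_depth_law_real[OF \<theta>]
    unfolding expectation_depth_law_real[OF \<theta>] by (simp add: integral_distr)
  also have "\<dots> = depth_expect \<theta> k (\<lambda>d. iexp ((t / r) * (real d - (1 + harm_sum \<theta> k))))"
    by (simp add: expectation_depth_law[OF \<theta>])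
  also have "\<dots> = (\<Prod>i=1..k. bernoulli_char (1 / (\<theta> + real i)) (t / r))"
    by (rule depth_expect_iexp[OF \<theta>])
  finally show ?thesis by (simp add: r_def)
qed

lemma harm_sum_minus_harm_sum2_at_top:
  assumes "\<theta> > 0"
  shows "filterlim (\<lambda>k. harm_sum \<theta> k - harm_sum2 \<theta> k) at_top sequentially"
proof -
  have "(\<lambda>k. (harm_sum \<theta> k - ln (real k) + Digamma (\<theta> + 1)) - harm_sum2 \<theta> k - Digamma (\<theta> + 1))
      \<longlonglongrightarrow> 0 - Polygamma 1 (\<theta> + 1) - Digamma (\<theta> + 1)"
    by (intro tendsto_intros harm_sum_minus_ln_tendsto[OF assms] harm_sum2_tendsto[OF assms])
  from filterlim_tendsto_add_at_top[OF this filterlim_compose[OF ln_at_top filterlim_real_sequentially]]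
  show ?thesis by simp
qed

lemma depth_law_clt:
  assumes \<theta>: "\<theta> > 0"
  shows "weak_conv_m (\<lambda>n. distr (measure_pmf (depth_law \<theta> n)) borel
            (\<lambda>d. (real d - measure_pmf.expectation (depth_law \<theta> n) real) /
                 sqrt (measure_pmf.variance (depth_law \<theta> n) real))) std_normal_distribution"
proof (rule levy_continuity)
  fix t :: real
  define \<mu> where "\<mu> n = distr (measure_pmf (depth_law \<theta> n)) borel
      (\<lambda>d. (real d - measure_pmf.expectation (depth_law \<theta> n) real) /
           sqrt (measure_pmf.variance (depth_law \<theta> n) real))" for n
  define r where "r k = sqrt (harm_sum \<theta> k - harm_sum2 \<theta> k)" for k
  have r_top: "filterlim r at_top sequentially"
    unfolding r_def by (rule filterlim_compose[OF sqrt_at_top harm_sum_minus_harm_sum2_at_top[OF \<theta>]])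
  have "(\<lambda>k. \<bar>t\<bar>^3 / 6 / r k + t^4 / 8 / (r k * r k)) \<longlonglongrightarrow> 0 + 0"
    by (intro tendsto_add tendsto_divide_0[OF tendsto_const] filterlim_at_top_imp_at_infinity
        filterlim_at_top_mult_at_top r_top)
  then have bound_0: "(\<lambda>k. \<bar>t\<bar>^3 / (6 * r k) + t^4 / (8 * (r k)^2)) \<longlonglongrightarrow> 0"
    by (simp add: power2_eq_square)
  have "\<forall>\<^sub>F k in sequentially. cmod (char (\<mu> (Suc (Suc k))) t - of_real (exp (- (t^2) / 2)))
      \<le> \<bar>t\<bar>^3 / (6 * r k) + t^4 / (8 * (r k)^2)"
    using r_top[unfolded filterlim_at_top_dense, rule_format, of 0]
  proof eventually_elim
    case (elim k)
    then show ?case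
      unfolding \<mu>_def char_depth_law_standardized[OF \<theta>] r_def[symmetric]
      by (intro norm_prod_bernoulli_char_minus_gaussian[OF \<theta>]) (auto simp: r_def)
  qed
  then have "(\<lambda>k. char (\<mu> (Suc (Suc k))) t - of_real (exp (- (t^2) / 2))) \<longlonglongrightarrow> 0"
    by (rule Lim_null_comparison[OF _ bound_0])
  then have "(\<lambda>k. char (\<mu> (k + 2)) t) \<longlonglongrightarrow> char std_normal_distribution t"
    by (simp add: LIM_zero_iff char_std_normal_distribution numeral_2_eq_2)
  then show "(\<lambda>n. char (\<mu> n) t) \<longlonglongrightarrow> char std_normal_distribution t"
    by (rule LIMSEQ_offset)
qed (auto intro: prob_space.real_distribution_distr[OF prob_space_measure_pmf] real_dist_normal_dist)

section \<open>Stein's method for the Poisson distribution\<close>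

lemma integral_indicator_singleton_mult_pmf:
  fixes f :: "'a \<Rightarrow> real"
  shows "measure_pmf.expectation M (\<lambda>x. indicator {a} x * f x) = f a * pmf M a"
  by (subst integral_measure_pmf_real[of "{a}"]) (auto split: split_indicator_asm)

lemma abs_integral_indicator_mult_le:
  fixes f :: "'a \<Rightarrow> real"
  assumes f: "integrable (measure_pmf M) f" "measure_pmf.expectation M f = 0"
    and sign: "f a \<ge> 0" "\<And>x. x \<noteq> a \<Longrightarrow> f x \<le> 0"
  shows "\<bar>measure_pmf.expectation M (\<lambda>x. indicator A x * f x)\<bar> \<le> f a * pmf M a"
proof -
  have int: "integrable (measure_pmf M) (\<lambda>x. indicator B x * f x)" for B
    using integrable_real_mult_indicator[OF _ f(1), of B] by (simp add: mult.commute)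
  have "measure_pmf.expectation M (\<lambda>x. indicator A x * f x)
      \<le> measure_pmf.expectation M (\<lambda>x. indicator {a} x * f x)"
    using sign by (intro integral_mono int) (auto simp: indicator_def)
  moreover have "measure_pmf.expectation M (\<lambda>x. f x - indicator {a} x * f x)
      \<le> measure_pmf.expectation M (\<lambda>x. indicator A x * f x)"
    using sign by (intro integral_mono int Bochner_Integration.integrable_diff f(1))
      (auto simp: indicator_def)
  moreover have "measure_pmf.expectation M (\<lambda>x. f x - indicator {a} x * f x) = - (f a * pmf M a)"
    using f int by (simp add: integral_indicator_singleton_mult_pmf)
  ultimately show ?thesis
    unfolding integral_indicator_singleton_mult_pmf by linarith
qed

definition poisson_weight :: "real \<Rightarrow> nat \<Rightarrow> real" where
  "poisson_weight l j = l ^ j / fact j * exp (- l)"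

definition poisson_cdf :: "real \<Rightarrow> nat \<Rightarrow> real" where
  "poisson_cdf l d = (\<Sum>i\<le>d. poisson_weight l i)"

text \<open>With \<open>Z \<sim> Poisson(l)\<close>, \<open>g(d + 1) = poisson_weight l j * stein_sol l d j\<close> solves the Stein
  equation \<open>l g(d + 1) - d g(d) = 1[d = j] - P(Z = j)\<close>.\<close>

definition stein_sol :: "real \<Rightarrow> nat \<Rightarrow> nat \<Rightarrow> real" where
  "stein_sol l d j = ((if j \<le> d then 1 else 0) - poisson_cdf l d) / (l * poisson_weight l d)"

definition stein_sol_diff :: "real \<Rightarrow> nat \<Rightarrow> nat \<Rightarrow> real" where
  "stein_sol_diff l d j = stein_sol l (Suc d) j - stein_sol l d j"

context
  fixes l :: real
  assumes l: "l > 0"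
begin

lemma poisson_weight_pos: "poisson_weight l j > 0"
  using l by (simp add: poisson_weight_def)

lemma pmf_poisson_pmf_eq_weight: "pmf (poisson_pmf l) j = poisson_weight l j"
  using l by (simp add: poisson_weight_def)

lemma poisson_weight_Suc: "poisson_weight l (Suc j) = poisson_weight l j * l / real (Suc j)"
  by (simp add: poisson_weight_def field_simps)

lemma poisson_weight_sums: "poisson_weight l sums 1"
proof -
  have "(\<lambda>n. l^n /\<^sub>R fact n * exp (- l)) sums (exp l * exp (- l))"
    by (rule sums_mult2[OF exp_converges])
  then show ?thesis
    by (simp add: poisson_weight_def[abs_def] divide_inverse mult_ac exp_minus)
qed

lemma poisson_cdf_nonneg: "poisson_cdf l d \<ge> 0"
  unfolding poisson_cdf_def using poisson_weight_pos by (intro sum_nonneg) (auto intro: less_imp_le)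

lemma poisson_cdf_le_1: "poisson_cdf l d \<le> 1"
proof -
  have "poisson_cdf l d = (\<Sum>i<Suc d. poisson_weight l i)"
    by (simp add: poisson_cdf_def lessThan_Suc_atMost)
  also have "\<dots> \<le> suminf (poisson_weight l)"
    using poisson_weight_sums poisson_weight_pos
    by (intro sum_le_suminf) (auto simp: sums_iff intro: less_imp_le)
  also have "\<dots> = 1" using poisson_weight_sums by (simp add: sums_iff)
  finally show ?thesis .
qed

lemma poisson_cdf_Suc: "poisson_cdf l (Suc d) = poisson_cdf l d + poisson_weight l (Suc d)"
  by (simp add: poisson_cdf_def)

lemma poisson_cdf_Suc_shift:
  "poisson_cdf l (Suc d) = poisson_weight l 0 + (\<Sum>i\<le>d. poisson_weight l (Suc i))"
  unfolding poisson_cdf_def by (rule sum.atMost_Suc_shift)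

lemma poisson_tail_sums: "(\<lambda>r. poisson_weight l (r + Suc d)) sums (1 - poisson_cdf l d)"
proof -
  have "poisson_weight l sums (1 - poisson_cdf l d + (\<Sum>i<Suc d. poisson_weight l i))"
    using poisson_weight_sums by (simp add: poisson_cdf_def lessThan_Suc_atMost)
  then show ?thesis by (subst sums_iff_shift)
qed

lemma stein_sol_equation:
  "l * stein_sol l d j - (if d = 0 then 0 else real d * stein_sol l (d - 1) j)
    = (if d = j then 1 / poisson_weight l d else 0) - 1"
proof (cases d)
  case 0
  then show ?thesis
    using l poisson_weight_pos[of 0] by (auto simp: stein_sol_def poisson_cdf_def field_simps)
next
  case (Suc d')
  have w: "poisson_weight l d' > 0" "poisson_weight l d > 0" by (rule poisson_weight_pos)+
  have rel: "l * poisson_weight l d' = real d * poisson_weight l d"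
    using poisson_weight_Suc[of d'] Suc by (simp add: field_simps)
  define x where "x = (if j \<le> d' then 1 else 0) - poisson_cdf l d'"
  have "real d * stein_sol l (d - 1) j = real d * (x / (real d * poisson_weight l d))"
    using Suc rel by (simp add: stein_sol_def x_def)
  also have "\<dots> = x / poisson_weight l d" using Suc by simp
  finally have sol_pred: "real d * stein_sol l (d - 1) j = x / poisson_weight l d" .
  have sol: "l * stein_sol l d j = ((if j \<le> d then 1 else 0) - poisson_cdf l d) / poisson_weight l d"
    using w l unfolding stein_sol_def by simp
  have "l * stein_sol l d j - real d * stein_sol l (d - 1) j
      = (((if j \<le> d then 1 else 0) - (if j \<le> d' then 1 else 0)) - poisson_weight l d) / poisson_weight l d"
    unfolding sol_pred sol x_def using Suc poisson_cdf_Suc[of d'] w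
    by (simp add: diff_divide_distrib add_divide_distrib)
  also have "(if j \<le> d then 1 else 0) - (if j \<le> d' then 1 else 0) = (if d = j then 1 else (0::real))"
    using Suc by auto
  finally show ?thesis using Suc w by (simp add: diff_divide_distrib)
qed

text \<open>The sign pattern of \<open>stein_sol_diff l d\<close> comes from the ratios
  \<open>poisson_weight l (i + 1) / poisson_weight l i = l / (i + 1)\<close> decreasing in \<open>i\<close>.\<close>

lemma stein_sol_diff_nonpos_le:
  assumes "j \<le> d"
  shows "stein_sol_diff l d j \<le> 0"
proof -
  have w: "poisson_weight l d > 0" "poisson_weight l (Suc d) > 0" by (rule poisson_weight_pos)+
  have "(1 - poisson_cdf l (Suc d)) * poisson_weight l d \<le> (1 - poisson_cdf l d) * poisson_weight l (Suc d)"
  proof (rule sums_le[OF _ sums_mult2[OF poisson_tail_sums] sums_mult2[OF poisson_tail_sums]])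
    fix r
    have "l / real (r + Suc (Suc d)) \<le> l / real (Suc d)"
      using l by (intro divide_left_mono) auto
    then have "(poisson_weight l (r + Suc d) * poisson_weight l d) * (l / real (r + Suc (Suc d)))
        \<le> (poisson_weight l (r + Suc d) * poisson_weight l d) * (l / real (Suc d))"
      using poisson_weight_pos by (intro mult_left_mono) (auto intro: less_imp_le)
    then show "poisson_weight l (r + Suc (Suc d)) * poisson_weight l d
        \<le> poisson_weight l (r + Suc d) * poisson_weight l (Suc d)"
      using poisson_weight_Suc[of "r + Suc d"] poisson_weight_Suc[of d] by (simp add: mult_ac)
  qed
  then show ?thesis
    using assms w l by (simp add: stein_sol_diff_def stein_sol_def divide_simps mult_ac)
qed

lemma stein_sol_diff_nonpos_gt:
  assumes "j > Suc d"
  shows "stein_sol_diff l d j \<le> 0"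
proof -
  have w: "poisson_weight l d > 0" "poisson_weight l (Suc d) > 0" by (rule poisson_weight_pos)+
  have "poisson_cdf l d * poisson_weight l (Suc d) = (\<Sum>i\<le>d. poisson_weight l i * poisson_weight l (Suc d))"
    by (simp add: poisson_cdf_def sum_distrib_right)
  also have "\<dots> \<le> (\<Sum>i\<le>d. poisson_weight l (Suc i) * poisson_weight l d)"
  proof (rule sum_mono)
    fix i assume "i \<in> {..d}"
    then have "l / real (Suc d) \<le> l / real (Suc i)" using l by (intro divide_left_mono) auto
    then have "poisson_weight l i * poisson_weight l d * (l / real (Suc d))
        \<le> poisson_weight l i * poisson_weight l d * (l / real (Suc i))"
      using poisson_weight_pos by (intro mult_left_mono) (auto intro: less_imp_le)
    then show "poisson_weight l i * poisson_weight l (Suc d) \<le> poisson_weight l (Suc i) * poisson_weight l d"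
      by (simp add: poisson_weight_Suc mult_ac)
  qed
  also have "\<dots> = (\<Sum>i\<le>d. poisson_weight l (Suc i)) * poisson_weight l d"
    by (simp add: sum_distrib_right)
  also have "\<dots> \<le> poisson_cdf l (Suc d) * poisson_weight l d"
    using poisson_cdf_Suc_shift[of d] poisson_weight_pos[of 0] w by (intro mult_right_mono) auto
  finally show ?thesis
    using assms w l by (simp add: stein_sol_diff_def stein_sol_def divide_simps mult_ac)
qed

lemma stein_sol_diff_diag:
  "0 \<le> stein_sol_diff l d (Suc d) \<and> stein_sol_diff l d (Suc d) * poisson_weight l (Suc d) \<le> 2 / l"
proof -
  have w: "poisson_weight l d > 0" "poisson_weight l (Suc d) > 0" by (rule poisson_weight_pos)+
  have "stein_sol_diff l d (Suc d) * poisson_weight l (Suc d)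
      = poisson_weight l (Suc d) * ((1 - poisson_cdf l (Suc d)) / (l * poisson_weight l (Suc d)))
        + poisson_weight l (Suc d) * (poisson_cdf l d / (l * poisson_weight l d))"
    by (simp add: stein_sol_diff_def stein_sol_def algebra_simps diff_divide_distrib)
  also have "poisson_weight l (Suc d) * ((1 - poisson_cdf l (Suc d)) / (l * poisson_weight l (Suc d)))
      = (1 - poisson_cdf l (Suc d)) / l"
    using w by simp
  also have "poisson_weight l (Suc d) * (poisson_cdf l d / (l * poisson_weight l d))
      = poisson_cdf l d / real (Suc d)"
    unfolding poisson_weight_Suc[of d] using w l by (simp add: field_simps)
  finally have eq: "stein_sol_diff l d (Suc d) * poisson_weight l (Suc d)
      = (1 - poisson_cdf l (Suc d)) / l + poisson_cdf l d / real (Suc d)" .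
  have "l * poisson_cdf l d = (\<Sum>i\<le>d. poisson_weight l (Suc i) * real (Suc i))"
    unfolding poisson_cdf_def sum_distrib_left
    by (rule sum.cong) (use l in \<open>auto simp: poisson_weight_Suc\<close>)
  also have "\<dots> \<le> (\<Sum>i\<le>d. poisson_weight l (Suc i)) * real (Suc d)"
    unfolding sum_distrib_right
    by (rule sum_mono) (use poisson_weight_pos in \<open>auto intro!: mult_left_mono less_imp_le\<close>)
  also have "\<dots> \<le> 1 * real (Suc d)"
    using poisson_cdf_Suc_shift[of d] poisson_weight_pos[of 0] poisson_cdf_le_1[of "Suc d"]
    by (intro mult_right_mono) auto
  finally have "poisson_cdf l d / real (Suc d) \<le> 1 / l"
    using l by (simp add: divide_simps mult_ac)
  moreover have "(1 - poisson_cdf l (Suc d)) / l \<le> 1 / l"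
    using poisson_cdf_nonneg[of "Suc d"] l by (simp add: divide_right_mono)
  moreover have "0 \<le> (1 - poisson_cdf l (Suc d)) / l + poisson_cdf l d / real (Suc d)"
    using poisson_cdf_le_1[of "Suc d"] poisson_cdf_nonneg[of d] l by simp
  moreover have "2 / l = 1 / l + 1 / l" by simp
  ultimately have "0 \<le> stein_sol_diff l d (Suc d) * poisson_weight l (Suc d)
      \<and> stein_sol_diff l d (Suc d) * poisson_weight l (Suc d) \<le> 2 / l"
    unfolding eq by linarith
  then show ?thesis using w(2) by (simp add: zero_le_mult_iff)
qed

lemma integrable_stein_sol: "integrable (measure_pmf (poisson_pmf l)) (stein_sol l d)"
proof -
  have "\<bar>stein_sol l d j\<bar> \<le> 2 / (l * poisson_weight l d)" for j
  proof -
    have "\<bar>(if j \<le> d then 1 else 0) - poisson_cdf l d\<bar> \<le> 2"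
      using poisson_cdf_le_1[of d] poisson_cdf_nonneg[of d] by auto
    then show ?thesis
      using poisson_weight_pos[of d] l unfolding stein_sol_def
      by (simp add: abs_divide divide_right_mono abs_mult)
  qed
  then show ?thesis
    by (intro measure_pmf.integrable_const_bound[where B = "2 / (l * poisson_weight l d)"]) auto
qed

lemma integrable_stein_sol_diff: "integrable (measure_pmf (poisson_pmf l)) (stein_sol_diff l d)"
  unfolding stein_sol_diff_def[abs_def]
  by (intro Bochner_Integration.integrable_diff integrable_stein_sol)

lemma integral_stein_sol: "measure_pmf.expectation (poisson_pmf l) (stein_sol l d) = 0"
proof -
  let ?M = "measure_pmf (poisson_pmf l)" and ?c = "l * poisson_weight l d"
  have "integral\<^sup>L ?M (stein_sol l d) = integral\<^sup>L ?M (\<lambda>j. indicator {..d} j / ?c - poisson_cdf l d / ?c)"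
    by (rule Bochner_Integration.integral_cong) (auto simp: stein_sol_def diff_divide_distrib)
  also have "\<dots> = integral\<^sup>L ?M (indicator {..d}) / ?c - poisson_cdf l d / ?c"
    by (subst Bochner_Integration.integral_diff)
      (auto intro!: measure_pmf.integrable_const_bound[where B = "1 / \<bar>?c\<bar>"] split: split_indicator)
  also have "integral\<^sup>L ?M (indicator {..d} :: nat \<Rightarrow> real) = poisson_cdf l d"
    by (simp add: measure_measure_pmf_finite pmf_poisson_pmf_eq_weight poisson_cdf_def)
  finally show ?thesis by simp
qed

lemma abs_integral_indicator_stein_sol_diff:
  "\<bar>measure_pmf.expectation (poisson_pmf l) (\<lambda>j. indicator A j * stein_sol_diff l d j)\<bar> \<le> 2 / l"
proof -
  have "measure_pmf.expectation (poisson_pmf l) (stein_sol_diff l d) = 0"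
    unfolding stein_sol_diff_def[abs_def]
    by (simp add: Bochner_Integration.integral_diff[OF integrable_stein_sol integrable_stein_sol]
        integral_stein_sol)
  then have "\<bar>measure_pmf.expectation (poisson_pmf l) (\<lambda>j. indicator A j * stein_sol_diff l d j)\<bar>
      \<le> stein_sol_diff l d (Suc d) * pmf (poisson_pmf l) (Suc d)"
  proof (rule abs_integral_indicator_mult_le[OF integrable_stein_sol_diff])
    show "stein_sol_diff l d j \<le> 0" if "j \<noteq> Suc d" for j
      using that stein_sol_diff_nonpos_le[of j d] stein_sol_diff_nonpos_gt[of d j] by (cases "j \<le> d") auto
  qed (use stein_sol_diff_diag[of d] in auto)
  also have "\<dots> \<le> 2 / l"
    using stein_sol_diff_diag[of d] by (simp add: pmf_poisson_pmf_eq_weight)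
  finally show ?thesis .
qed

end

section \<open>Poisson approximation of the depth\<close>

text \<open>The Stein operator of \<open>Poisson(1 + harm_sum \<theta> k)\<close> applied to \<open>depth_pmf \<theta> k\<close> is the
  discrete derivative of \<open>stein_mass \<theta> k\<close>.\<close>

primrec stein_mass :: "real \<Rightarrow> nat \<Rightarrow> nat \<Rightarrow> real" where
  "stein_mass \<theta> 0 d = (if d = 0 then 1 else 0)"
| "stein_mass \<theta> (Suc k) d = (1 - 1 / (\<theta> + real k + 1)) * stein_mass \<theta> k d
     + 1 / (\<theta> + real k + 1) * seq_shift (stein_mass \<theta> k) d
     + (1 / (\<theta> + real k + 1))^2 * depth_pmf \<theta> k d"

lemma stein_mass_nonneg: "\<theta> > 0 \<Longrightarrow> stein_mass \<theta> k d \<ge> 0"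
proof (induction k arbitrary: d)
  case (Suc k)
  have "1 / (\<theta> + real k + 1) \<le> 1" "seq_shift (stein_mass \<theta> k) d \<ge> 0"
    using Suc by (auto simp: seq_shift_def)
  then show ?case using Suc depth_pmf_nonneg[of \<theta> k d] by simp
qed simp

lemma stein_mass_eq_0: "\<theta> > 0 \<Longrightarrow> d > k \<Longrightarrow> stein_mass \<theta> k d = 0"
proof (induction k arbitrary: d)
  case (Suc k)
  have "seq_shift (stein_mass \<theta> k) d = 0" using Suc by (cases d) auto
  then show ?case using Suc depth_pmf_eq_0[of \<theta> d k] by simp
qed simp

lemma sum_stein_mass:
  "\<theta> > 0 \<Longrightarrow> N \<ge> Suc k \<Longrightarrow> (\<Sum>d\<le>N. stein_mass \<theta> k d) = 1 + harm_sum2 \<theta> k"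
proof (induction k arbitrary: N)
  case 0
  then show ?case by (simp add: harm_sum2_def)
next
  case (Suc k)
  obtain N' where N: "N = Suc N'" using Suc.prems by (cases N) auto
  let ?c = "1 / (\<theta> + real k + 1)"
  have "(\<Sum>d\<le>N. stein_mass \<theta> (Suc k) d) = (1 - ?c) * (\<Sum>d\<le>N. stein_mass \<theta> k d)
      + ?c * (\<Sum>d\<le>N. seq_shift (stein_mass \<theta> k) d) + ?c^2 * (\<Sum>d\<le>N. depth_pmf \<theta> k d)"
    by (simp add: sum.distrib sum_distrib_left del: sum.atMost_Suc)
  also have "(\<Sum>d\<le>N. seq_shift (stein_mass \<theta> k) d) = (\<Sum>d\<le>N'. stein_mass \<theta> k d)"
    unfolding N by (rule sum_atMost_Suc_seq_shift)
  also have "(\<Sum>d\<le>N'. stein_mass \<theta> k d) = 1 + harm_sum2 \<theta> k"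
    using Suc.IH[of N'] Suc.prems N by auto
  also have "(\<Sum>d\<le>N. stein_mass \<theta> k d) = 1 + harm_sum2 \<theta> k"
    using Suc.IH[of N] Suc.prems by auto
  also have "(\<Sum>d\<le>N. depth_pmf \<theta> k d) = 1"
    using sum_depth_pmf[OF Suc.prems(1)] Suc.prems by auto
  finally show ?case by (simp add: harm_sum2_Suc algebra_simps)
qed

lemma depth_pmf_stein_identity:
  assumes \<theta>: "\<theta> > 0"
  shows "(1 + harm_sum \<theta> k) * depth_pmf \<theta> k d - real (Suc d) * depth_pmf \<theta> k (Suc d)
    = seq_shift (stein_mass \<theta> k) d - stein_mass \<theta> k d"
proof (induction k arbitrary: d)
  case 0
  then show ?case by (cases d) (auto simp: depth_pmf_0[OF \<theta>] harm_sum_def)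
next
  case (Suc k)
  define c where "c = 1 / (\<theta> + real k + 1)"
  define l where "l = 1 + harm_sum \<theta> k"
  let ?q = "depth_pmf \<theta> k" and ?u = "stein_mass \<theta> k"
  have mean: "1 + harm_sum \<theta> (Suc k) = l + c" by (simp add: harm_sum_Suc l_def c_def)
  have pmf: "depth_pmf \<theta> (Suc k) d = (1 - c) * ?q d + c * seq_shift ?q d" for d
    using depth_pmf_Suc[OF \<theta>] by (simp add: c_def)
  have IH: "l * ?q d - real (Suc d) * ?q (Suc d) = seq_shift ?u d - ?u d"
    using Suc.IH[of d] by (simp add: l_def)
  have shifted: "l * seq_shift ?q d - real d * ?q d = seq_shift (seq_shift ?u) d - seq_shift ?u d"
    using Suc.IH[of "d - 1"] by (cases d) (simp_all add: l_def)
  have "(1 + harm_sum \<theta> (Suc k)) * depth_pmf \<theta> (Suc k) d - real (Suc d) * depth_pmf \<theta> (Suc k) (Suc d)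
      = (1 - c) * (l * ?q d - real (Suc d) * ?q (Suc d)) + c * (l * seq_shift ?q d - real d * ?q d)
        + c^2 * (seq_shift ?q d - ?q d)"
    unfolding mean pmf by (simp add: algebra_simps power2_eq_square)
  also have "\<dots> = seq_shift (stein_mass \<theta> (Suc k)) d - stein_mass \<theta> (Suc k) d"
    unfolding IH shifted by (simp add: seq_shift_def c_def algebra_simps)
  finally show ?case .
qed

lemma sum_depth_pmf_stein_operator:
  assumes \<theta>: "\<theta> > 0"
  shows "(\<Sum>d\<le>Suc k. depth_pmf \<theta> k d
      * ((1 + harm_sum \<theta> k) * C d - (if d = 0 then 0 else real d * C (d - 1))))
    = (\<Sum>d\<le>Suc k. stein_mass \<theta> k d * (C (Suc d) - C d))"
proof -
  let ?l = "1 + harm_sum \<theta> k"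
  have down: "(\<Sum>d\<le>Suc k. depth_pmf \<theta> k d * (if d = 0 then 0 else real d * C (d - 1)))
      = (\<Sum>d\<le>Suc k. real (Suc d) * depth_pmf \<theta> k (Suc d) * C d)"
    using depth_pmf_eq_0[OF \<theta>, of "Suc (Suc k)" k]
    by (subst sum.atMost_Suc_shift) (simp add: mult_ac)
  have up: "(\<Sum>d\<le>Suc k. C d * seq_shift (stein_mass \<theta> k) d) = (\<Sum>d\<le>Suc k. stein_mass \<theta> k d * C (Suc d))"
    using stein_mass_eq_0[OF \<theta>, of k "Suc k"]
    by (subst sum.atMost_Suc_shift) (simp add: mult_ac)
  have "(\<Sum>d\<le>Suc k. depth_pmf \<theta> k d * (?l * C d - (if d = 0 then 0 else real d * C (d - 1))))
      = (\<Sum>d\<le>Suc k. C d * (?l * depth_pmf \<theta> k d - real (Suc d) * depth_pmf \<theta> k (Suc d)))"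
    by (simp add: right_diff_distrib sum_subtractf down algebra_simps del: sum.atMost_Suc)
  also have "\<dots> = (\<Sum>d\<le>Suc k. C d * (seq_shift (stein_mass \<theta> k) d - stein_mass \<theta> k d))"
    by (simp only: depth_pmf_stein_identity[OF \<theta>])
  also have "\<dots> = (\<Sum>d\<le>Suc k. stein_mass \<theta> k d * (C (Suc d) - C d))"
    by (simp add: right_diff_distrib sum_subtractf up algebra_simps del: sum.atMost_Suc)
  finally show ?thesis .
qed

lemma depth_pmf_div_poisson_weight:
  fixes k :: nat
  assumes \<theta>: "\<theta> > 0"
  defines "l \<equiv> 1 + harm_sum \<theta> k"
  shows "depth_pmf \<theta> k j / poisson_weight l j - 1
    = (\<Sum>d\<le>Suc k. stein_mass \<theta> k d * stein_sol_diff l d j)"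
proof -
  have l: "l > 0" using harm_sum_nonneg[OF \<theta>, of k] by (simp add: l_def add_pos_nonneg)
  have "(\<Sum>d\<le>Suc k. depth_pmf \<theta> k d * ((if d = j then 1 / poisson_weight l d else 0) - 1))
      = (\<Sum>d\<le>Suc k. stein_mass \<theta> k d * stein_sol_diff l d j)"
    using sum_depth_pmf_stein_operator[OF \<theta>, of k "\<lambda>d. stein_sol l d j"]
    unfolding l_def[symmetric] stein_sol_equation[OF l] stein_sol_diff_def .
  moreover have "(\<Sum>d\<le>Suc k. depth_pmf \<theta> k d * ((if d = j then 1 / poisson_weight l d else 0) - 1))
      = (\<Sum>d\<le>Suc k. if d = j then depth_pmf \<theta> k d / poisson_weight l d else 0)
        - (\<Sum>d\<le>Suc k. depth_pmf \<theta> k d)"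
    unfolding sum_subtractf[symmetric] by (rule sum.cong) (auto simp: right_diff_distrib)
  moreover have "(\<Sum>d\<le>Suc k. if d = j then depth_pmf \<theta> k d / poisson_weight l d else 0)
      = depth_pmf \<theta> k j / poisson_weight l j"
    using depth_pmf_eq_0[OF \<theta>, of j k] by (simp add: sum.delta' del: sum.atMost_Suc)
  ultimately show ?thesis using sum_depth_pmf[OF \<theta>, of k "Suc k"] by (simp del: sum.atMost_Suc)
qed

lemma prob_depth_law_minus_poisson:
  fixes k :: nat
  assumes \<theta>: "\<theta> > 0"
  defines "l \<equiv> 1 + harm_sum \<theta> k"
  shows "measure_pmf.prob (depth_law \<theta> (Suc (Suc k))) A - measure_pmf.prob (poisson_pmf l) A
    = (\<Sum>d\<le>Suc k. stein_mass \<theta> k d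
        * measure_pmf.expectation (poisson_pmf l) (\<lambda>j. indicator A j * stein_sol_diff l d j))"
proof -
  have l: "l > 0" using harm_sum_nonneg[OF \<theta>, of k] by (simp add: l_def add_pos_nonneg)
  let ?M = "measure_pmf (poisson_pmf l)"
  have int_A: "integrable ?M (\<lambda>j. indicator A j * stein_sol_diff l d j)" for d
    using integrable_real_mult_indicator[OF _ integrable_stein_sol_diff[OF l], of A d]
    by (simp add: mult.commute)
  have support: "a \<in> {..Suc k}" if "depth_pmf \<theta> k a \<noteq> 0" for a
    using that depth_pmf_eq_0[OF \<theta>, of a k] by (meson atMost_iff not_le)
  have "measure_pmf.prob (depth_law \<theta> (Suc (Suc k))) A
      = integral\<^sup>L (measure_pmf (depth_law \<theta> (Suc (Suc k)))) (indicator A)"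
    by simp
  also have "\<dots> = (\<Sum>j\<le>Suc k. indicator A j * depth_pmf \<theta> k j)"
    by (subst integral_measure_pmf_real[of "{..Suc k}"])
      (auto simp: depth_pmf_def set_pmf_iff dest: support[unfolded depth_pmf_def])
  also have "\<dots> = integral\<^sup>L ?M (\<lambda>j. indicator A j * (depth_pmf \<theta> k j / poisson_weight l j))"
  proof -
    have "integral\<^sup>L ?M (\<lambda>j. indicator A j * (depth_pmf \<theta> k j / poisson_weight l j))
        = (\<Sum>j\<le>Suc k. indicator A j * (depth_pmf \<theta> k j / poisson_weight l j) * pmf (poisson_pmf l) j)"
      by (rule integral_measure_pmf_real) (auto dest: support)
    also have "\<dots> = (\<Sum>j\<le>Suc k. indicator A j * depth_pmf \<theta> k j)"
      using poisson_weight_pos[OF l, THEN less_imp_neq]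
      by (intro sum.cong) (simp_all add: pmf_poisson_pmf_eq_weight[OF l])
    finally show ?thesis by simp
  qed
  also have "\<dots> = integral\<^sup>L ?M (\<lambda>j. indicator A j
      + (\<Sum>d\<le>Suc k. stein_mass \<theta> k d * (indicator A j * stein_sol_diff l d j)))"
    using depth_pmf_div_poisson_weight[OF \<theta>, of k, folded l_def]
    by (simp add: sum_distrib_left[symmetric] algebra_simps del: sum.atMost_Suc)
  also have "\<dots> = measure_pmf.prob (poisson_pmf l) A
      + (\<Sum>d\<le>Suc k. stein_mass \<theta> k d * integral\<^sup>L ?M (\<lambda>j. indicator A j * stein_sol_diff l d j))"
    using int_A
    by (subst Bochner_Integration.integral_add)
      (auto intro!: measure_pmf.integrable_const_bound[where B = 1] split: split_indicator
        simp: Bochner_Integration.integral_sum simp del: sum.atMost_Suc)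
  finally show ?thesis by simp
qed

lemma abs_prob_depth_law_minus_poisson_le:
  fixes k :: nat
  assumes \<theta>: "\<theta> > 0"
  defines "l \<equiv> 1 + harm_sum \<theta> k"
  shows "\<bar>measure_pmf.prob (depth_law \<theta> (Suc (Suc k))) A - measure_pmf.prob (poisson_pmf l) A\<bar>
    \<le> 2 * (1 + harm_sum2 \<theta> k) / l"
proof -
  have l: "l > 0" using harm_sum_nonneg[OF \<theta>, of k] by (simp add: l_def add_pos_nonneg)
  have "\<bar>measure_pmf.prob (depth_law \<theta> (Suc (Suc k))) A - measure_pmf.prob (poisson_pmf l) A\<bar>
      \<le> (\<Sum>d\<le>Suc k. \<bar>stein_mass \<theta> k d
          * measure_pmf.expectation (poisson_pmf l) (\<lambda>j. indicator A j * stein_sol_diff l d j)\<bar>)"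
    unfolding prob_depth_law_minus_poisson[OF \<theta>, of k, folded l_def] by (rule sum_abs)
  also have "\<dots> \<le> (\<Sum>d\<le>Suc k. stein_mass \<theta> k d * (2 / l))"
    by (intro sum_mono) (simp only: abs_mult abs_of_nonneg[OF stein_mass_nonneg[OF \<theta>]]
      mult_left_mono[OF abs_integral_indicator_stein_sol_diff[OF l] stein_mass_nonneg[OF \<theta>]])
  also have "\<dots> = 2 * (1 + harm_sum2 \<theta> k) / l"
    using sum_stein_mass[OF \<theta>, of k "Suc k"]
    by (simp add: sum_divide_distrib[symmetric] sum_distrib_right[symmetric] del: sum.atMost_Suc)
  finally show ?thesis .
qed

lemma dTV_nonneg: "dTV P Q \<ge> 0"
proof -
  have "\<bar>measure_pmf.prob P A - measure_pmf.prob Q A\<bar> \<le> 1" for A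
    using measure_pmf.prob_le_1[of P A] measure_pmf.prob_le_1[of Q A]
      measure_nonneg[of P A] measure_nonneg[of Q A] by linarith
  then show ?thesis
    unfolding dTV_def by (intro cSUP_upper2[where x = "{}"] bdd_aboveI2[where M = 1]) auto
qed

lemma dTV_le:
  assumes "\<And>A. \<bar>measure_pmf.prob P A - measure_pmf.prob Q A\<bar> \<le> B"
  shows "dTV P Q \<le> B"
  unfolding dTV_def using assms by (intro cSUP_least) auto

lemma dTV_depth_law_poisson_le:
  assumes "\<theta> > 0"
  shows "dTV (depth_law \<theta> (Suc (Suc k))) (poisson_pmf (1 + harm_sum \<theta> k))
    \<le> 2 * (1 + harm_sum2 \<theta> k) / (1 + harm_sum \<theta> k)"
  by (intro dTV_le abs_prob_depth_law_minus_poisson_le assms)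

lemma dTV_depth_law_poisson_bigo:
  assumes \<theta>: "\<theta> > 0"
  shows "(\<lambda>n. dTV (depth_law \<theta> n) (poisson_pmf (measure_pmf.expectation (depth_law \<theta> n) real)))
    \<in> O(\<lambda>n. 1 / ln (real n))"
proof (rule bigoI)
  define E where "E n = measure_pmf.expectation (depth_law \<theta> n) real" for n
  define c where "c = Digamma (\<theta> + 1)"
  have "\<forall>\<^sub>F n in sequentially. \<bar>E n - (ln (real n) - c + 1)\<bar> < 1"
    using order_tendstoD(2)[OF tendsto_rabs_zero[OF expectation_depth_law_asymp[OF \<theta>]], of 1]
    by (simp add: E_def c_def)
  moreover have "\<forall>\<^sub>F n in sequentially. ln (real n) \<ge> 2 * (\<bar>c\<bar> + 1)"
    using filterlim_compose[OF ln_at_top filterlim_real_sequentially] by (simp add: filterlim_at_top)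
  ultimately show "\<forall>\<^sub>F n in sequentially. norm (dTV (depth_law \<theta> n) (poisson_pmf (E n)))
       \<le> (4 * (1 + Polygamma 1 (\<theta> + 1))) * norm (1 / ln (real n))"
    using eventually_ge_at_top[of 2]
  proof eventually_elim
    case (elim n)
    define k where "k = n - 2"
    have n: "n = Suc (Suc k)" using elim(3) by (simp add: k_def)
    have E: "E n = 1 + harm_sum \<theta> k" unfolding E_def n by (rule expectation_depth_law_real[OF \<theta>])
    have ln_pos: "ln (real n) > 0" and E_ge: "E n \<ge> ln (real n) / 2"
      using elim(1,2) abs_ge_self[of c] by (auto simp: abs_less_iff)
    have "norm (dTV (depth_law \<theta> n) (poisson_pmf (E n))) \<le> 2 * (1 + harm_sum2 \<theta> k) / E n"
      using dTV_nonneg dTV_depth_law_poisson_le[OF \<theta>, of k] unfolding E unfolding n by simp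
    also have "\<dots> \<le> 2 * (1 + Polygamma 1 (\<theta> + 1)) / (ln (real n) / 2)"
      using harm_sum2_le_Polygamma[OF \<theta>, of k] harm_sum2_nonneg[of \<theta> k] ln_pos E_ge
      by (intro divide_mono) auto
    also have "\<dots> = (4 * (1 + Polygamma 1 (\<theta> + 1))) * norm (1 / ln (real n))"
      using ln_pos by simp
    finally show ?case .
  qed
qed

theorem corollary2p2:
  fixes \<theta> :: real
  assumes "\<theta> > 0"
  defines "E \<equiv> \<lambda>n. measure_pmf.expectation (depth_law \<theta> n) real"
      and "V \<equiv> \<lambda>n. measure_pmf.variance (depth_law \<theta> n) real"
  shows "(\<forall>n\<ge>2. E n = 1 + (\<Sum>i=1..n-2. 1 / (\<theta> + real i)))
    \<and> ((\<lambda>n. E n - (ln (real n) - Digamma (\<theta> + 1) + 1)) \<longlonglongrightarrow> 0)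
    \<and> (\<forall>n\<ge>2. V n = (\<Sum>i=1..n-2. 1 / (\<theta> + real i)) - (\<Sum>i=1..n-2. (1 / (\<theta> + real i))^2))
    \<and> ((\<lambda>n. V n - (ln (real n) - Digamma (\<theta> + 1) - Polygamma 1 (\<theta> + 1))) \<longlonglongrightarrow> 0)
    \<and> weak_conv_m (\<lambda>n. distr (measure_pmf (depth_law \<theta> n)) borel
            (\<lambda>d. (real d - E n) / sqrt (V n))) std_normal_distribution
    \<and> (\<lambda>n. dTV (depth_law \<theta> n) (poisson_pmf (E n))) \<in> O(\<lambda>n. 1 / ln (real n))"
proof (intro conjI allI impI)
  fix n :: nat
  assume "n \<ge> 2"
  then obtain k where n: "n = Suc (Suc k)" using add_2_eq_Suc le_Suc_ex by metis
  show "E n = 1 + (\<Sum>i=1..n-2. 1 / (\<theta> + real i))"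
    unfolding E_def n expectation_depth_law_real[OF assms(1)] by (simp add: harm_sum_def)
  show "V n = (\<Sum>i=1..n-2. 1 / (\<theta> + real i)) - (\<Sum>i=1..n-2. (1 / (\<theta> + real i))^2)"
    unfolding V_def n variance_depth_law_real[OF assms(1)] by (simp add: harm_sum_def harm_sum2_def)
next
  show "(\<lambda>n. E n - (ln (real n) - Digamma (\<theta> + 1) + 1)) \<longlonglongrightarrow> 0"
    unfolding E_def by (rule expectation_depth_law_asymp[OF assms(1)])
  show "(\<lambda>n. V n - (ln (real n) - Digamma (\<theta> + 1) - Polygamma 1 (\<theta> + 1))) \<longlonglongrightarrow> 0"
    unfolding V_def by (rule variance_depth_law_asymp[OF assms(1)])
  show "weak_conv_m (\<lambda>n. distr (measure_pmf (depth_law \<theta> n)) borel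
      (\<lambda>d. (real d - E n) / sqrt (V n))) std_normal_distribution"
    unfolding E_def V_def by (rule depth_law_clt[OF assms(1)])
  show "(\<lambda>n. dTV (depth_law \<theta> n) (poisson_pmf (E n))) \<in> O(\<lambda>n. 1 / ln (real n))"
    unfolding E_def by (rule dTV_depth_law_poisson_bigo[OF assms(1)])
qed

end
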